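(* In the two-state model with $\delta(t)=\tfrac12e^{-t}+\tfrac12e^{-2t}$, $g_1(a)=-a^2$, and $g_2(b)=\frac{193}{144}+\frac56b$ for $b<\frac7{12}$, $g_2(b)=2-(1-b)^2$ for $b\ge\frac7{12}$: (i) $Q^*\sim(5/12,7/12)$ is a weak equilibrium but not a strong equilibrium; indeed, for every $b\in[0,7/12)$ and $Q\sim(5/12,b)$, one has $F(2,Q^* )<F(2,Q\otimes_\varepsilon Q^* )$ for all sufficiently small $\varepsilon>0$. (ii) The equation $2a=\frac12\big(\frac1{1+a}+\frac1{2+a}\big)\big(a^2+\frac{193}{144}\big)$ has a unique solution $\bar a\in[0,\infty)$, it satisfies $2\bar a\ge\frac56$, and $\bar Q^*\sim(\bar a,0)$ is a strong equilibrium.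
   Context: Two-state model: $S=\{1,2\}$, admissible rows unrestricted ($D_i=E_i$), so every admissible generator has the form $Q=\begin{pmatrix}-a&a\\ b&-b\end{pmatrix}$ with $a,b\ge0$, written $Q\sim(a,b)$. The payoff is $f(t,1,(-a,a))=\delta(t)g_1(a)$ and $f(t,2,(b,-b))=\delta(t)g_2(b)$. $X$ is a continuous-time Markov chain with generator $Q$; $F(i,Q)=\mathbb E_{i,Q}[\int_0^\infty f(t,X_t,Q_{X_t})dt]$. $Q\otimes_\varepsilon Q'$: generator $Q$ on $[0,\varepsilon]$, then $Q'$ on $(\varepsilon,\infty)$, with expected payoff $F(i,Q\otimes_\varepsilon Q')$. $Q^*$ is a weak equilibrium if $\liminf_{\varepsilon\downarrow0}\varepsilon^{-1}(F(i,Q^* )-F(i,Q\otimes_\varepsilon Q^* ))\ge0$ for all admissible $Q$ and $i\in S$; a strong equilibrium if for every $i,Q$ there is $\varepsilon>0$ with $F(i,Q^* )\ge F(i,Q\otimes_{\varepsilon'}Q^* )$ for all $0<\varepsilon'\le\varepsilon$. *)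

theory Defs
  imports "HOL-Analysis.Analysis"
begin

text \<open>Two-state model, states 1 and 2 (as naturals).  An admissible generator
  Q = ((-a, a), (b, -b)) with a, b \<ge> 0 is represented by the pair (a, b).\<close>

type_synonym gen = "real \<times> real"

definition admissible :: "gen \<Rightarrow> bool" where
  "admissible Q \<longleftrightarrow> fst Q \<ge> 0 \<and> snd Q \<ge> 0"

definition states :: "nat set" where
  "states = {1, 2}"

text \<open>Transition probabilities P_ij(t) = (exp (t Q))_ij of the continuous-time Markov
  chain with generator Q ~ (a,b).  (When a + b = 0 the chain is constant; the formula
  then gives the identity since x / 0 = 0.)\<close>
definition trans :: "gen \<Rightarrow> real \<Rightarrow> nat \<Rightarrow> nat \<Rightarrow> real" where
  "trans Q t i j =
     (let a = fst Q; b = snd Q; p12 = a * (1 - exp (- (a + b) * t)) / (a + b);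
          p21 = b * (1 - exp (- (a + b) * t)) / (a + b)
      in if i = 1 then (if j = 1 then 1 - p12 else p12)
         else (if j = 1 then p21 else 1 - p21))"

definition rate :: "(real \<Rightarrow> real) \<Rightarrow> (real \<Rightarrow> real) \<Rightarrow> gen \<Rightarrow> nat \<Rightarrow> real" where
  "rate g1 g2 Q j = (if j = 1 then g1 (fst Q) else g2 (snd Q))"

text \<open>F(i,Q) = E_{i,Q}[ \<integral>_0^\<infinity> \<delta>(t) g_{X_t}(Q_{X_t}) dt ].\<close>
definition F :: "(real \<Rightarrow> real) \<Rightarrow> (real \<Rightarrow> real) \<Rightarrow> (real \<Rightarrow> real) \<Rightarrow> nat \<Rightarrow> gen \<Rightarrow> real" where
  "F \<delta> g1 g2 i Q =
     (LBINT t:{0..}. \<delta> t * (\<Sum>j\<in>states. trans Q t i j * rate g1 g2 Q j))"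

text \<open>F(i, Q \<otimes>_\<epsilon> Q'): generator Q on [0,\<epsilon>], then Q' on (\<epsilon>,\<infinity>).\<close>
definition Fsw :: "(real \<Rightarrow> real) \<Rightarrow> (real \<Rightarrow> real) \<Rightarrow> (real \<Rightarrow> real) \<Rightarrow> nat \<Rightarrow> gen \<Rightarrow> real \<Rightarrow> gen \<Rightarrow> real" where
  "Fsw \<delta> g1 g2 i Q \<epsilon> Q' =
     (LBINT t:{0..\<epsilon>}. \<delta> t * (\<Sum>j\<in>states. trans Q t i j * rate g1 g2 Q j))
   + (LBINT t:{\<epsilon><..}. \<delta> t * (\<Sum>k\<in>states. \<Sum>j\<in>states.
          trans Q \<epsilon> i k * trans Q' (t - \<epsilon>) k j * rate g1 g2 Q' j))"

definition weak_eq :: "(real \<Rightarrow> real) \<Rightarrow> (real \<Rightarrow> real) \<Rightarrow> (real \<Rightarrow> real) \<Rightarrow> gen \<Rightarrow> bool" where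
  "weak_eq \<delta> g1 g2 Qs \<longleftrightarrow>
     (\<forall>Q i. admissible Q \<longrightarrow> i \<in> states \<longrightarrow>
        Liminf (at_right 0) (\<lambda>\<epsilon>. ereal ((F \<delta> g1 g2 i Qs - Fsw \<delta> g1 g2 i Q \<epsilon> Qs) / \<epsilon>)) \<ge> 0)"

definition strong_eq :: "(real \<Rightarrow> real) \<Rightarrow> (real \<Rightarrow> real) \<Rightarrow> (real \<Rightarrow> real) \<Rightarrow> gen \<Rightarrow> bool" where
  "strong_eq \<delta> g1 g2 Qs \<longleftrightarrow>
     (\<forall>Q i. admissible Q \<longrightarrow> i \<in> states \<longrightarrow>
        (\<exists>\<epsilon>>0. \<forall>\<epsilon>'. 0 < \<epsilon>' \<and> \<epsilon>' \<le> \<epsilon> \<longrightarrow> F \<delta> g1 g2 i Qs \<ge> Fsw \<delta> g1 g2 i Q \<epsilon>' Qs))"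

end

theory Submission
  imports Defs
begin

text \<open>
  With the discount \<open>\<delta>(t) = (e\<^sup>-\<^sup>t + e\<^sup>-\<^sup>2\<^sup>t)/2\<close> all payoffs of the two-state chain are explicit
  exponential sums, and so is \<open>\<epsilon> \<mapsto> F(i, Q \<otimes>\<^sub>\<epsilon> Q')\<close>.  At \<open>\<epsilon> = 0\<close> it equals \<open>F(i, Q')\<close>, and its
  derivative there is the Hamiltonian gap \<open>H(Q)\<^sub>i - H(Q')\<^sub>i\<close> with
  \<open>H(Q)\<^sub>i = g\<^sub>i(Q\<^sub>i) + \<Sum>\<^sub>j Q\<^sub>i\<^sub>j F(j, Q')\<close>.  So maximising the Hamiltonian gives a weak equilibrium,
  and where the maximiser is not unique the sign of the second derivative decides.

  For \<open>Q\<^sup>* = (5/12, 7/12)\<close> one finds \<open>F(2, Q\<^sup>*) - F(1, Q\<^sup>*) = 5/6\<close>, so \<open>H\<^sub>1 = 5x/6 - x\<^sup>2\<close> and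
  \<open>H\<^sub>2 = g\<^sub>2(y) - 5y/6\<close> are maximal at \<open>Q\<^sup>*\<close>; but \<open>H\<^sub>2\<close> is constant on \<open>[0, 7/12]\<close>, and there the
  second derivative is \<open>(7/12 - b)/12 > 0\<close>.  For \<open>Q = (a, 0)\<close> the equation for \<open>a\<close> says exactly
  \<open>2a = F(2, Q) - F(1, Q)\<close>, so \<open>H\<^sub>1 = 2ax - x\<^sup>2\<close> has the strict maximiser \<open>a\<close> and
  \<open>H\<^sub>2 = g\<^sub>2(y) - 2ay\<close> the strict maximiser \<open>0\<close>, because \<open>2a > 5/6\<close>.  The deviation \<open>(a, y)\<close>,
  \<open>y > 0\<close>, leaves \<open>H\<^sub>1\<close> unchanged, but seen from state 1 its second derivative is
  \<open>-a (193/144 - g\<^sub>2(y) + 2ay) < 0\<close>.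
\<close>

section \<open>Exponential sums\<close>

definition exp_sum :: "(real \<times> real) list \<Rightarrow> real \<Rightarrow> real" where
  "exp_sum cs x = (\<Sum>(c, \<mu>)\<leftarrow>cs. c * exp (- \<mu> * x))"

definition exp_sum_deriv :: "(real \<times> real) list \<Rightarrow> (real \<times> real) list" where
  "exp_sum_deriv cs = map (\<lambda>(c, \<mu>). (- c * \<mu>, \<mu>)) cs"

definition exp_sum_tail :: "(real \<times> real) list \<Rightarrow> real \<Rightarrow> real" where
  "exp_sum_tail cs x = (\<Sum>(c, \<mu>)\<leftarrow>cs. c / \<mu> * exp (- \<mu> * x))"

lemma exp_sum_Nil [simp]: "exp_sum [] x = 0"
  and exp_sum_Cons [simp]: "exp_sum ((c, \<mu>) # cs) x = c * exp (- \<mu> * x) + exp_sum cs x"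
  by (simp_all add: exp_sum_def)

lemma exp_sum_deriv_Nil [simp]: "exp_sum_deriv [] = []"
  and exp_sum_deriv_Cons [simp]: "exp_sum_deriv ((c, \<mu>) # cs) = (- c * \<mu>, \<mu>) # exp_sum_deriv cs"
  by (simp_all add: exp_sum_deriv_def)

lemma exp_sum_tail_Nil [simp]: "exp_sum_tail [] x = 0"
  and exp_sum_tail_Cons [simp]: "exp_sum_tail ((c, \<mu>) # cs) x = c / \<mu> * exp (- \<mu> * x) + exp_sum_tail cs x"
  by (simp_all add: exp_sum_tail_def)

lemma has_real_derivative_exp_sum:
  "(exp_sum cs has_real_derivative exp_sum (exp_sum_deriv cs) x) (at x)"
proof (induction cs)
  case Nil
  then show ?case by simp
next
  case (Cons p cs)
  then show ?case
    by (cases p) (auto intro!: derivative_eq_intros)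
qed

lemma set_integral_exp_minus_Ioi:
  fixes \<mu> x :: real
  assumes "\<mu> > 0"
  shows "set_integrable lborel {x<..} (\<lambda>t. exp (- \<mu> * t))"
    and "(LBINT t:{x<..}. exp (- \<mu> * t)) = exp (- \<mu> * x) / \<mu>"
proof -
  have has_int: "((\<lambda>t. exp (- \<mu> * t)) has_integral exp (- \<mu> * x) / \<mu>) {x..}"
    using has_integral_exp_minus_to_infinity[OF assms] by simp
  have "(\<lambda>t. exp (- \<mu> * t)) absolutely_integrable_on {x..}"
    by (rule nonnegative_absolutely_integrable_1) (use has_int integrable_on_def in auto)
  then have Ici: "set_integrable lborel {x..} (\<lambda>t. exp (- \<mu> * t))"
    unfolding set_integrable_def by (subst (asm) integrable_completion) auto
  show "set_integrable lborel {x<..} (\<lambda>t. exp (- \<mu> * t))"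
    by (rule set_integrable_subset[OF Ici]) auto
  have "(LBINT t:{x<..}. exp (- \<mu> * t)) = (LBINT t:{x..}. exp (- \<mu> * t))"
    by (rule set_integral_discrete_difference[where X = "{x}"]) auto
  also have "\<dots> = exp (- \<mu> * x) / \<mu>"
    using set_borel_integral_eq_integral(2)[OF Ici] has_int integral_unique by metis
  finally show "(LBINT t:{x<..}. exp (- \<mu> * t)) = exp (- \<mu> * x) / \<mu>" .
qed

lemma set_integrable_exp_sum_Ioi:
  "\<forall>(c, \<mu>)\<in>set cs. \<mu> > 0 \<Longrightarrow> set_integrable lborel {x<..} (exp_sum cs)"
proof (induction cs)
  case (Cons p cs)
  obtain c \<mu> where p: "p = (c, \<mu>)" by fastforce
  have "set_integrable lborel {x<..} (\<lambda>t. c * exp (- \<mu> * t))"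
    using Cons.prems set_integral_exp_minus_Ioi(1) by (simp add: p)
  moreover have "set_integrable lborel {x<..} (exp_sum cs)"
    using Cons by simp
  ultimately show ?case
    unfolding p exp_sum_Cons by (rule set_integral_add(1))
qed (simp add: set_integrable_def)

lemma set_integral_exp_sum_Ioi:
  "\<forall>(c, \<mu>)\<in>set cs. \<mu> > 0 \<Longrightarrow> (LBINT t:{x<..}. exp_sum cs t) = exp_sum_tail cs x"
proof (induction cs)
  case (Cons p cs)
  obtain c \<mu> where p: "p = (c, \<mu>)" by fastforce
  have \<mu>: "\<mu> > 0" and cs: "\<forall>(c, \<mu>)\<in>set cs. \<mu> > 0"
    using Cons.prems by (auto simp: p)
  have "(LBINT t:{x<..}. exp_sum (p # cs) t)
      = (LBINT t:{x<..}. c * exp (- \<mu> * t)) + (LBINT t:{x<..}. exp_sum cs t)"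
    unfolding p exp_sum_Cons
    by (rule set_integral_add(2)[OF set_integrable_mult_right[OF set_integral_exp_minus_Ioi(1)[OF \<mu>]]
          set_integrable_exp_sum_Ioi[OF cs]])
  then show ?case
    using Cons.IH[OF cs] set_integral_exp_minus_Ioi(2)[OF \<mu>, of x] by (simp add: p)
qed (simp add: exp_sum_def[abs_def])

section \<open>Local sign of a function from its derivatives\<close>

lemma eventually_at_right_less_of_deriv_neg:
  fixes f :: "real \<Rightarrow> real"
  assumes "(f has_real_derivative D) (at a)" "D < 0"
  shows "\<forall>\<^sub>F x in at_right a. f x < f a"
proof -
  obtain d where "d > 0" and d: "\<And>h. 0 < h \<Longrightarrow> h < d \<Longrightarrow> f (a + h) < f a"
    using DERIV_neg_dec_right[OF assms] by blast
  have "f x < f a" if "a < x" "x < a + d" for x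
    using d[of "x - a"] that by simp
  then show ?thesis
    unfolding eventually_at_right_field using \<open>d > 0\<close> by (intro exI[of _ "a + d"]) auto
qed

lemma eventually_at_right_greater_of_deriv2_pos:
  fixes f f' :: "real \<Rightarrow> real"
  assumes f': "\<And>x. (f has_real_derivative f' x) (at x)"
    and f'': "(f' has_real_derivative D) (at a)" and "f' a = 0" "D > 0"
  shows "\<forall>\<^sub>F x in at_right a. f a < f x"
proof -
  obtain d where "d > 0" and d: "\<And>h. 0 < h \<Longrightarrow> h < d \<Longrightarrow> f' a < f' (a + h)"
    using DERIV_pos_inc_right[OF f'' \<open>D > 0\<close>] by blast
  have "f a < f x" if "a < x" "x < a + d" for x
  proof -
    obtain z where z: "a < z" "z < x" "f x - f a = (x - a) * f' z"
      using MVT2[OF \<open>a < x\<close>, of f f'] f' by blast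
    have "f' z > 0"
      using d[of "z - a"] z that \<open>f' a = 0\<close> by simp
    then have "(x - a) * f' z > 0"
      using that by simp
    then show ?thesis
      using z by linarith
  qed
  then show ?thesis
    unfolding eventually_at_right_field using \<open>d > 0\<close> by (intro exI[of _ "a + d"]) auto
qed

lemma eventually_at_right_less_of_deriv2_neg:
  fixes f f' :: "real \<Rightarrow> real"
  assumes "\<And>x. (f has_real_derivative f' x) (at x)"
    and "(f' has_real_derivative D) (at a)" "f' a = 0" "D < 0"
  shows "\<forall>\<^sub>F x in at_right a. f x < f a"
proof -
  have "\<forall>\<^sub>F x in at_right a. - f a < - f x"
    by (rule eventually_at_right_greater_of_deriv2_pos[where f' = "\<lambda>x. - f' x" and D = "- D"])
      (use assms in \<open>auto intro: DERIV_minus\<close>)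
  then show ?thesis
    by simp
qed

section \<open>The two-state chain\<close>

definition other_state :: "nat \<Rightarrow> nat" where
  "other_state i = (if i = 1 then 2 else 1)"

lemma other_state_in_states: "i \<in> states \<Longrightarrow> other_state i \<in> states"
  by (auto simp: states_def other_state_def)

lemma states_cases: "i \<in> states \<Longrightarrow> i = 1 \<or> i = 2"
  by (simp add: states_def)

definition exit_rate :: "gen \<Rightarrow> nat \<Rightarrow> real" where
  "exit_rate Q i = (if i = 1 then fst Q else snd Q)"

definition total_rate :: "gen \<Rightarrow> real" where
  "total_rate Q = fst Q + snd Q"

lemma total_rate_nonneg: "admissible Q \<Longrightarrow> total_rate Q \<ge> 0"
  by (simp add: admissible_def total_rate_def)

lemma exit_rate_eq_0_of_total_rate_eq_0: "admissible Q \<Longrightarrow> total_rate Q = 0 \<Longrightarrow> exit_rate Q i = 0"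
  by (auto simp: admissible_def total_rate_def exit_rate_def)

text \<open>The limit of \<open>E\<^sub>i x(X\<^sub>t)\<close> as \<open>t \<rightarrow> \<infinity>\<close>.  For \<open>Q = 0\<close> the junk value of the division
  makes it \<open>x i\<close>, which is again the right limit.\<close>
definition limit_mean :: "gen \<Rightarrow> nat \<Rightarrow> (nat \<Rightarrow> real) \<Rightarrow> real" where
  "limit_mean Q i x = x i + exit_rate Q i / total_rate Q * (x (other_state i) - x i)"

lemma limit_mean_exit_rate_0: "exit_rate Q i = 0 \<Longrightarrow> limit_mean Q i x = x i"
  by (simp add: limit_mean_def)

lemma limit_mean_other_state:
  assumes "total_rate Q \<noteq> 0" "i \<in> states"
  shows "limit_mean Q (other_state i) x = limit_mean Q i x"
  using assms
  by (auto simp: states_def limit_mean_def exit_rate_def total_rate_def other_state_def field_simps)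

lemma sum_trans_eq:
  assumes "i \<in> states"
  shows "(\<Sum>j\<in>states. trans Q t i j * x j)
    = limit_mean Q i x + (x i - limit_mean Q i x) * exp (- total_rate Q * t)"
  using assms
  by (auto simp: states_def trans_def Let_def limit_mean_def exit_rate_def total_rate_def
      other_state_def algebra_simps diff_divide_distrib)

lemma total_rate_mult_limit_mean:
  assumes "admissible Q"
  shows "total_rate Q * (limit_mean Q i x - x i) = exit_rate Q i * (x (other_state i) - x i)"
  using assms
  by (auto simp: admissible_def limit_mean_def exit_rate_def total_rate_def add_nonneg_eq_0_iff)

definition long_run_rate :: "(real \<Rightarrow> real) \<Rightarrow> (real \<Rightarrow> real) \<Rightarrow> gen \<Rightarrow> nat \<Rightarrow> real" where
  "long_run_rate g1 g2 Q i = limit_mean Q i (rate g1 g2 Q)"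

definition transient_rate :: "(real \<Rightarrow> real) \<Rightarrow> (real \<Rightarrow> real) \<Rightarrow> gen \<Rightarrow> nat \<Rightarrow> real" where
  "transient_rate g1 g2 Q i = rate g1 g2 Q i - long_run_rate g1 g2 Q i"

lemma expected_rate_eq:
  assumes "i \<in> states"
  shows "(\<Sum>j\<in>states. trans Q t i j * rate g1 g2 Q j)
    = long_run_rate g1 g2 Q i + transient_rate g1 g2 Q i * exp (- total_rate Q * t)"
  unfolding long_run_rate_def transient_rate_def using assms by (rule sum_trans_eq)

section \<open>Payoffs under the discount function\<close>

definition disc :: "real \<Rightarrow> real" where
  "disc t = exp (- t) / 2 + exp (- 2 * t) / 2"

text \<open>\<open>disc_moment n s\<close> is the Laplace transform at \<open>s\<close> of \<open>(-1)\<^sup>n\<close> times the \<open>n\<close>-th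
  derivative of \<open>disc\<close>.\<close>
definition disc_moment :: "nat \<Rightarrow> real \<Rightarrow> real" where
  "disc_moment n s = 1 / (2 * (1 + s)) + 2 ^ n / (2 * (2 + s))"

lemma disc_moment_0_0 [simp]: "disc_moment 0 0 = 3/4"
  by (simp add: disc_moment_def)

lemma disc_moment_1:
  assumes "s \<ge> 0"
  shows "disc_moment 1 s = 1 - s * disc_moment 0 s"
proof -
  have "s / (2 * (1 + s)) = 1/2 - 1 / (2 * (1 + s))" "s / (2 * (2 + s)) = 1/2 - 1 / (2 + s)"
      "2 / (2 * (2 + s)) = 1 / (2 + s)"
    using assms by (simp_all add: field_simps)
  then show ?thesis
    by (simp add: disc_moment_def ring_distribs)
qed

lemma disc_moment_2:
  assumes "s \<ge> 0"
  shows "disc_moment 2 s = 3/2 - s + s\<^sup>2 * disc_moment 0 s"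
proof -
  have "s\<^sup>2 / (2 * (1 + s)) = s / 2 - 1/2 + 1 / (2 * (1 + s))"
      "s\<^sup>2 / (2 * (2 + s)) = s / 2 - 1 + 4 / (2 * (2 + s))"
    using assms by (simp_all add: field_simps power2_eq_square)
  then show ?thesis
    by (simp add: disc_moment_def ring_distribs)
qed

text \<open>\<open>disc_tail e s = \<integral>\<^sub>e\<^sup>\<infinity> disc t * exp (- s * (t - e)) dt\<close>.\<close>
definition disc_tail :: "real \<Rightarrow> real \<Rightarrow> real" where
  "disc_tail e s = exp (- e) / (2 * (1 + s)) + exp (- 2 * e) / (2 * (2 + s))"

lemma disc_tail_0 [simp]: "disc_tail 0 s = disc_moment 0 s"
  by (simp add: disc_tail_def disc_moment_def)

lemma disc_payoff_Ioi:
  assumes "s \<ge> 0"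
  shows "set_integrable lborel {e<..} (\<lambda>t. disc t * (\<alpha> + \<beta> * exp (- s * (t - e))))"
    and "(LBINT t:{e<..}. disc t * (\<alpha> + \<beta> * exp (- s * (t - e))))
      = \<alpha> * disc_tail e 0 + \<beta> * disc_tail e s"
proof -
  define cs where "cs = [(\<alpha> / 2, 1), (\<alpha> / 2, 2),
    (\<beta> * exp (s * e) / 2, 1 + s), (\<beta> * exp (s * e) / 2, 2 + s)]"
  have exps: "exp (- s * (t - e)) = exp (s * e) * exp (- s * t)"
      "exp (- (1 + s) * t) = exp (- t) * exp (- s * t)"
      "exp (- (2 + s) * t) = exp (- 2 * t) * exp (- s * t)" for t
    by (simp_all add: mult_exp_exp algebra_simps)
  have integrand: "(\<lambda>t. disc t * (\<alpha> + \<beta> * exp (- s * (t - e)))) = exp_sum cs"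
    by (rule ext) (simp only: cs_def exp_sum_Cons exp_sum_Nil exps disc_def, simp add: algebra_simps)
  have rates: "\<forall>(c, \<mu>)\<in>set cs. \<mu> > 0"
    using assms by (simp add: cs_def)
  have "exp_sum_tail cs e = \<alpha> * disc_tail e 0 + \<beta> * disc_tail e s"
    by (simp only: cs_def exp_sum_tail_Cons exp_sum_tail_Nil exps)
      (simp add: disc_tail_def mult_exp_exp field_simps)
  then show "set_integrable lborel {e<..} (\<lambda>t. disc t * (\<alpha> + \<beta> * exp (- s * (t - e))))"
    "(LBINT t:{e<..}. disc t * (\<alpha> + \<beta> * exp (- s * (t - e))))
      = \<alpha> * disc_tail e 0 + \<beta> * disc_tail e s"
    unfolding integrand
    using set_integrable_exp_sum_Ioi[OF rates] set_integral_exp_sum_Ioi[OF rates] by simp_all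
qed

lemma disc_payoff_Ici:
  assumes "s \<ge> 0"
  shows "set_integrable lborel {0..} (\<lambda>t. disc t * (\<alpha> + \<beta> * exp (- s * t)))"
    and "(LBINT t:{0..}. disc t * (\<alpha> + \<beta> * exp (- s * t)))
      = \<alpha> * disc_moment 0 0 + \<beta> * disc_moment 0 s"
proof -
  have Ioi: "set_integrable lborel {0<..} (\<lambda>t. disc t * (\<alpha> + \<beta> * exp (- s * t)))"
      "(LBINT t:{0<..}. disc t * (\<alpha> + \<beta> * exp (- s * t)))
        = \<alpha> * disc_moment 0 0 + \<beta> * disc_moment 0 s"
    using disc_payoff_Ioi[OF assms, of 0 \<alpha> \<beta>] by simp_all
  show "set_integrable lborel {0..} (\<lambda>t. disc t * (\<alpha> + \<beta> * exp (- s * t)))"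
    using Ioi(1) by (subst set_integrable_discrete_difference[where X = "{0}" and B = "{0<..}"]) auto
  show "(LBINT t:{0..}. disc t * (\<alpha> + \<beta> * exp (- s * t)))
      = \<alpha> * disc_moment 0 0 + \<beta> * disc_moment 0 s"
    using Ioi(2) by (subst set_integral_discrete_difference[where X = "{0}" and B = "{0<..}"]) auto
qed

lemma disc_payoff_Icc:
  assumes "s \<ge> 0" "e \<ge> 0"
  shows "(LBINT t:{0..e}. disc t * (\<alpha> + \<beta> * exp (- s * t)))
    = \<alpha> * (disc_moment 0 0 - disc_tail e 0) + \<beta> * (disc_moment 0 s - exp (- s * e) * disc_tail e s)"
proof -
  let ?f = "\<lambda>t. disc t * (\<alpha> + \<beta> * exp (- s * t))"
  have shift: "?f t = disc t * (\<alpha> + \<beta> * exp (- s * e) * exp (- s * (t - e)))" for t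
    by (simp add: mult_exp_exp algebra_simps)
  have int: "set_integrable lborel {0..} ?f"
    by (rule disc_payoff_Ici(1)[OF assms(1)])
  have "(LBINT t:{0..}. ?f t) = (LBINT t:{0..e} \<union> {e<..}. ?f t)"
    using assms(2) by (intro arg_cong[where f = "\<lambda>A. set_lebesgue_integral lborel A ?f"]) auto
  also have "\<dots> = (LBINT t:{0..e}. ?f t) + (LBINT t:{e<..}. ?f t)"
    using assms(2)
    by (intro set_integral_Un set_integrable_subset[OF int]) auto
  also have "(LBINT t:{e<..}. ?f t) = \<alpha> * disc_tail e 0 + \<beta> * exp (- s * e) * disc_tail e s"
    unfolding shift by (rule disc_payoff_Ioi(2)[OF assms(1)])
  finally show ?thesis
    using disc_payoff_Ici(2)[OF assms(1)] by (simp add: algebra_simps)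
qed

lemma F_disc_eq:
  assumes "admissible Q" "i \<in> states"
  shows "F disc g1 g2 i Q
    = long_run_rate g1 g2 Q i * disc_moment 0 0 + transient_rate g1 g2 Q i * disc_moment 0 (total_rate Q)"
  unfolding F_def expected_rate_eq[OF assms(2)]
  by (rule disc_payoff_Ici(2)[OF total_rate_nonneg[OF assms(1)]])

lemma F_other_state_diff:
  assumes "admissible Q" "i \<in> states"
  shows "F disc g1 g2 (other_state i) Q - F disc g1 g2 i Q
    = 3/4 * (long_run_rate g1 g2 Q (other_state i) - long_run_rate g1 g2 Q i)
      + disc_moment 0 (total_rate Q) * (transient_rate g1 g2 Q (other_state i) - transient_rate g1 g2 Q i)"
  unfolding F_disc_eq[OF assms(1) other_state_in_states[OF assms(2)]] F_disc_eq[OF assms]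
  by (simp add: algebra_simps)

section \<open>Switching generators at time \<open>\<epsilon>\<close>\<close>

text \<open>The payoff of switching at time \<open>\<epsilon>\<close>, as an exponential sum in \<open>\<epsilon>\<close>, when the expected
  payoff rate is \<open>\<alpha> + \<beta> e\<^sup>-\<^sup>s\<^sup>t\<close> before \<open>\<epsilon>\<close> and \<open>A(\<epsilon>) + B(\<epsilon>) e\<^sup>-\<^sup>s\<^sup>'\<^sup>(\<^sup>t\<^sup>-\<^sup>\<epsilon>\<^sup>)\<close> after it, with
  \<open>A(\<epsilon>) = A0 + A1 e\<^sup>-\<^sup>s\<^sup>\<epsilon>\<close> and \<open>B(\<epsilon>) = B0 + B1 e\<^sup>-\<^sup>s\<^sup>\<epsilon>\<close>.\<close>
definition switch_coeffs ::
    "real \<Rightarrow> real \<Rightarrow> real \<Rightarrow> real \<Rightarrow> real \<Rightarrow> real \<Rightarrow> real \<Rightarrow> real \<Rightarrow> (real \<times> real) list" where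
  "switch_coeffs \<alpha> \<beta> s A0 A1 B0 B1 s' =
    [(\<alpha> * disc_moment 0 0 + \<beta> * disc_moment 0 s, 0),
     ((A0 - \<alpha>) / 2 + B0 / (2 * (1 + s')), 1),
     ((A0 - \<alpha>) / 4 + B0 / (2 * (2 + s')), 2),
     (A1 / 2 + B1 / (2 * (1 + s')) - \<beta> / (2 * (1 + s)), 1 + s),
     (A1 / 4 + B1 / (2 * (2 + s')) - \<beta> / (2 * (2 + s)), 2 + s)]"

lemma exp_sum_switch_coeffs:
  "exp_sum (switch_coeffs \<alpha> \<beta> s A0 A1 B0 B1 s') e
    = \<alpha> * (disc_moment 0 0 - disc_tail e 0) + \<beta> * (disc_moment 0 s - exp (- s * e) * disc_tail e s)
      + (A0 + A1 * exp (- s * e)) * disc_tail e 0 + (B0 + B1 * exp (- s * e)) * disc_tail e s'"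
proof -
  have "exp (- (1 + s) * e) = exp (- e) * exp (- s * e)"
      "exp (- (2 + s) * e) = exp (- 2 * e) * exp (- s * e)"
    by (simp_all add: mult_exp_exp algebra_simps)
  then show ?thesis
    by (simp only: switch_coeffs_def exp_sum_Cons exp_sum_Nil)
      (simp add: disc_tail_def algebra_simps add_divide_distrib diff_divide_distrib)
qed

lemma exp_sum_deriv_switch_coeffs:
  assumes "s \<ge> 0"
  shows "exp_sum (exp_sum_deriv (switch_coeffs \<alpha> \<beta> s A0 A1 B0 B1 s')) 0
      = \<alpha> + \<beta> - (A0 + A1) - disc_moment 1 s' * (B0 + B1) - s * (3/4 * A1 + disc_moment 0 s' * B1)"
    and "exp_sum (exp_sum_deriv (exp_sum_deriv (switch_coeffs \<alpha> \<beta> s A0 A1 B0 B1 s'))) 0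
      = 3/2 * (A0 + A1 - \<alpha>) - (3/2 + s) * \<beta> + disc_moment 2 s' * (B0 + B1)
        + 2 * s * (A1 + disc_moment 1 s' * B1) + s\<^sup>2 * (3/4 * A1 + disc_moment 0 s' * B1)"
proof -
  \<comment> \<open>With the denominators as atoms, \<open>field_simps\<close> clears only \<open>p\<close> and \<open>q\<close> and the rest is ring
    arithmetic.\<close>
  define p q where "p = 1 + s" and "q = 2 + s"
  define u v where "u = 1 / (2 * (1 + s'))" and "v = 1 / (2 * (2 + s'))"
  have "p \<noteq> 0" "q \<noteq> 0"
    using assms by (simp_all add: p_def q_def)
  moreover have "B / (2 * (1 + s')) = B * u" "B / (2 * (2 + s')) = B * v"
      "disc_moment n s' = u + 2 ^ n * v" for B n
    by (simp_all add: u_def v_def disc_moment_def)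
  ultimately show "exp_sum (exp_sum_deriv (switch_coeffs \<alpha> \<beta> s A0 A1 B0 B1 s')) 0
      = \<alpha> + \<beta> - (A0 + A1) - disc_moment 1 s' * (B0 + B1) - s * (3/4 * A1 + disc_moment 0 s' * B1)"
    and "exp_sum (exp_sum_deriv (exp_sum_deriv (switch_coeffs \<alpha> \<beta> s A0 A1 B0 B1 s'))) 0
      = 3/2 * (A0 + A1 - \<alpha>) - (3/2 + s) * \<beta> + disc_moment 2 s' * (B0 + B1)
        + 2 * s * (A1 + disc_moment 1 s' * B1) + s\<^sup>2 * (3/4 * A1 + disc_moment 0 s' * B1)"
    unfolding switch_coeffs_def p_def[symmetric] q_def[symmetric]
    by (simp_all add: field_simps, simp_all add: p_def q_def algebra_simps power2_eq_square)
qed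

definition switch_payoff_coeffs :: "(real \<Rightarrow> real) \<Rightarrow> (real \<Rightarrow> real) \<Rightarrow> nat \<Rightarrow> gen \<Rightarrow> gen \<Rightarrow> (real \<times> real) list" where
  "switch_payoff_coeffs g1 g2 i Q Q' =
    (let A0 = limit_mean Q i (long_run_rate g1 g2 Q'); B0 = limit_mean Q i (transient_rate g1 g2 Q')
     in switch_coeffs (long_run_rate g1 g2 Q i) (transient_rate g1 g2 Q i) (total_rate Q)
          A0 (long_run_rate g1 g2 Q' i - A0) B0 (transient_rate g1 g2 Q' i - B0) (total_rate Q'))"

lemma Fsw_eq_exp_sum:
  assumes "admissible Q" "admissible Q'" "i \<in> states" "e \<ge> 0"
  shows "Fsw disc g1 g2 i Q e Q' = exp_sum (switch_payoff_coeffs g1 g2 i Q Q') e"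
proof -
  let ?a' = "long_run_rate g1 g2 Q'" and ?b' = "transient_rate g1 g2 Q'"
  have continuation: "(\<Sum>k\<in>states. \<Sum>j\<in>states. trans Q e i k * trans Q' (t - e) k j * rate g1 g2 Q' j)
      = (\<Sum>k\<in>states. trans Q e i k * ?a' k)
        + (\<Sum>k\<in>states. trans Q e i k * ?b' k) * exp (- total_rate Q' * (t - e))" for t
  proof -
    have "(\<Sum>k\<in>states. \<Sum>j\<in>states. trans Q e i k * trans Q' (t - e) k j * rate g1 g2 Q' j)
        = (\<Sum>k\<in>states. trans Q e i k * (\<Sum>j\<in>states. trans Q' (t - e) k j * rate g1 g2 Q' j))"
      by (simp add: sum_distrib_left mult.assoc)
    also have "\<dots> = (\<Sum>k\<in>states. trans Q e i k * (?a' k + ?b' k * exp (- total_rate Q' * (t - e))))"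
      by (intro sum.cong refl) (simp add: expected_rate_eq)
    also have "\<dots> = (\<Sum>k\<in>states. trans Q e i k * ?a' k)
        + (\<Sum>k\<in>states. trans Q e i k * ?b' k) * exp (- total_rate Q' * (t - e))"
      by (simp add: ring_distribs sum.distrib sum_distrib_right mult.assoc)
    finally show ?thesis .
  qed
  have "Fsw disc g1 g2 i Q e Q'
      = long_run_rate g1 g2 Q i * (disc_moment 0 0 - disc_tail e 0)
        + transient_rate g1 g2 Q i * (disc_moment 0 (total_rate Q) - exp (- total_rate Q * e) * disc_tail e (total_rate Q))
        + (\<Sum>k\<in>states. trans Q e i k * ?a' k) * disc_tail e 0
        + (\<Sum>k\<in>states. trans Q e i k * ?b' k) * disc_tail e (total_rate Q')"
    unfolding Fsw_def expected_rate_eq[OF assms(3)] continuation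
    using disc_payoff_Icc[OF total_rate_nonneg[OF assms(1)] assms(4)]
      disc_payoff_Ioi(2)[OF total_rate_nonneg[OF assms(2)]]
    by simp
  then show ?thesis
    unfolding switch_payoff_coeffs_def Let_def exp_sum_switch_coeffs sum_trans_eq[OF assms(3)]
    by (simp add: algebra_simps)
qed

lemma F_eq_exp_sum:
  assumes "admissible Q'" "i \<in> states"
  shows "F disc g1 g2 i Q' = exp_sum (switch_payoff_coeffs g1 g2 i Q Q') 0"
  unfolding switch_payoff_coeffs_def Let_def exp_sum_switch_coeffs F_disc_eq[OF assms]
  by simp

lemma Fsw_self:
  assumes "admissible Q" "i \<in> states" "e \<ge> 0"
  shows "Fsw disc g1 g2 i Q e Q = F disc g1 g2 i Q"
proof -
  let ?a = "long_run_rate g1 g2 Q" and ?b = "transient_rate g1 g2 Q"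
  have "limit_mean Q i ?a = ?a i \<and> limit_mean Q i ?b = 0"
  proof (cases "total_rate Q = 0")
    case True
    with assms(1) have "exit_rate Q i = 0"
      by (rule exit_rate_eq_0_of_total_rate_eq_0)
    then show ?thesis
      by (simp add: limit_mean_exit_rate_0 transient_rate_def long_run_rate_def)
  next
    case False
    then have "?a (other_state i) = ?a i"
      unfolding long_run_rate_def using assms(2) by (rule limit_mean_other_state)
    then have "limit_mean Q i ?a = ?a i"
      unfolding limit_mean_def by simp
    moreover have "limit_mean Q i ?b = limit_mean Q i (rate g1 g2 Q) - limit_mean Q i ?a"
      by (simp add: limit_mean_def transient_rate_def algebra_simps)
    ultimately show ?thesis
      by (simp add: long_run_rate_def)
  qed
  then show ?thesis
    unfolding Fsw_eq_exp_sum[OF assms(1,1,2,3)] F_disc_eq[OF assms(1,2)]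
      switch_payoff_coeffs_def Let_def exp_sum_switch_coeffs
    by (simp add: algebra_simps)
qed

lemma Fsw_absorbing:
  assumes "admissible Q" "admissible Q'" "i \<in> states" "e \<ge> 0"
    and "exit_rate Q i = 0" "exit_rate Q' i = 0" "rate g1 g2 Q i = rate g1 g2 Q' i"
  shows "Fsw disc g1 g2 i Q e Q' = F disc g1 g2 i Q'"
proof -
  have "long_run_rate g1 g2 Q i = rate g1 g2 Q' i" "transient_rate g1 g2 Q i = 0"
      "long_run_rate g1 g2 Q' i = rate g1 g2 Q' i" "transient_rate g1 g2 Q' i = 0"
    using assms(5-7) by (simp_all add: long_run_rate_def transient_rate_def limit_mean_exit_rate_0)
  moreover have "limit_mean Q i x = x i" for x
    using assms(5) by (rule limit_mean_exit_rate_0)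
  ultimately show ?thesis
    unfolding Fsw_eq_exp_sum[OF assms(1-4)] F_disc_eq[OF assms(2,3)] switch_payoff_coeffs_def Let_def
      exp_sum_switch_coeffs
    by (simp add: algebra_simps)
qed

definition hamiltonian :: "(real \<Rightarrow> real) \<Rightarrow> (real \<Rightarrow> real) \<Rightarrow> (nat \<Rightarrow> real) \<Rightarrow> gen \<Rightarrow> nat \<Rightarrow> real" where
  "hamiltonian g1 g2 V Q i = rate g1 g2 Q i + exit_rate Q i * (V (other_state i) - V i)"

abbreviation hamiltonian_for :: "(real \<Rightarrow> real) \<Rightarrow> (real \<Rightarrow> real) \<Rightarrow> gen \<Rightarrow> gen \<Rightarrow> nat \<Rightarrow> real" where
  "hamiltonian_for g1 g2 Q' \<equiv> hamiltonian g1 g2 (\<lambda>j. F disc g1 g2 j Q')"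

lemma hamiltonian_self:
  assumes "admissible Q" "i \<in> states"
  shows "hamiltonian_for g1 g2 Q Q i
    = long_run_rate g1 g2 Q i + disc_moment 1 (total_rate Q) * transient_rate g1 g2 Q i"
proof (cases "total_rate Q = 0")
  case True
  with assms(1) have "exit_rate Q i = 0"
    by (rule exit_rate_eq_0_of_total_rate_eq_0)
  moreover from this have "transient_rate g1 g2 Q i = 0"
    by (simp add: transient_rate_def long_run_rate_def limit_mean_def)
  ultimately show ?thesis
    by (simp add: hamiltonian_def transient_rate_def)
next
  case False
  let ?r = "rate g1 g2 Q" and ?a = "long_run_rate g1 g2 Q" and ?j = "other_state i"
    and ?s = "total_rate Q" and ?L = "disc_moment 0 (total_rate Q)"
  have "?a ?j = ?a i"
    unfolding long_run_rate_def using False assms(2) by (rule limit_mean_other_state)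
  then have dF: "F disc g1 g2 ?j Q - F disc g1 g2 i Q = ?L * (?r ?j - ?r i)"
    unfolding F_other_state_diff[OF assms] by (simp add: transient_rate_def)
  have sa: "exit_rate Q i * (?r ?j - ?r i) = ?s * (?a i - ?r i)"
    unfolding long_run_rate_def using total_rate_mult_limit_mean[OF assms(1)] by simp
  have "hamiltonian_for g1 g2 Q Q i = ?r i + ?L * (exit_rate Q i * (?r ?j - ?r i))"
    unfolding hamiltonian_def dF by simp
  also have "\<dots> = ?a i + (1 - ?s * ?L) * (?r i - ?a i)"
    unfolding sa by (simp add: algebra_simps)
  finally show ?thesis
    unfolding disc_moment_1[OF total_rate_nonneg[OF assms(1)]] transient_rate_def .
qed

lemma switch_payoff_deriv_at_0:
  assumes "admissible Q" "admissible Q'" "i \<in> states"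
  shows "exp_sum (exp_sum_deriv (switch_payoff_coeffs g1 g2 i Q Q')) 0
    = hamiltonian_for g1 g2 Q' Q i - hamiltonian_for g1 g2 Q' Q' i"
proof -
  let ?a' = "long_run_rate g1 g2 Q'" and ?b' = "transient_rate g1 g2 Q'"
    and ?j = "other_state i" and ?s = "total_rate Q" and ?q = "exit_rate Q i"
  have sa: "?s * (?a' i - limit_mean Q i ?a') = - (?q * (?a' ?j - ?a' i))"
    using total_rate_mult_limit_mean[OF assms(1), of i ?a'] by (simp add: algebra_simps)
  have sb: "?s * (?b' i - limit_mean Q i ?b') = - (?q * (?b' ?j - ?b' i))"
    using total_rate_mult_limit_mean[OF assms(1), of i ?b'] by (simp add: algebra_simps)
  have "exp_sum (exp_sum_deriv (switch_payoff_coeffs g1 g2 i Q Q')) 0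
      = rate g1 g2 Q i - ?a' i - disc_moment 1 (total_rate Q') * ?b' i
        - (3/4 * (?s * (?a' i - limit_mean Q i ?a'))
           + disc_moment 0 (total_rate Q') * (?s * (?b' i - limit_mean Q i ?b')))"
    unfolding switch_payoff_coeffs_def Let_def
      exp_sum_deriv_switch_coeffs(1)[OF total_rate_nonneg[OF assms(1)]]
    by (simp add: transient_rate_def algebra_simps)
  also have "\<dots> = rate g1 g2 Q i - ?a' i - disc_moment 1 (total_rate Q') * ?b' i
      + ?q * (F disc g1 g2 ?j Q' - F disc g1 g2 i Q')"
    unfolding sa sb F_other_state_diff[OF assms(2,3)] by (simp add: algebra_simps)
  also have "\<dots> = hamiltonian_for g1 g2 Q' Q i - hamiltonian_for g1 g2 Q' Q' i"
    unfolding hamiltonian_self[OF assms(2,3)] by (simp add: hamiltonian_def)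
  finally show ?thesis .
qed

text \<open>The second derivative of \<open>\<epsilon> \<mapsto> F(i, Q \<otimes>\<^sub>\<epsilon> Q')\<close> at \<open>\<epsilon> = 0\<close>.\<close>
definition switch_deriv2 :: "(real \<Rightarrow> real) \<Rightarrow> (real \<Rightarrow> real) \<Rightarrow> nat \<Rightarrow> gen \<Rightarrow> gen \<Rightarrow> real" where
  "switch_deriv2 g1 g2 i Q Q' =
    (let r = rate g1 g2 Q; a' = long_run_rate g1 g2 Q'; b' = transient_rate g1 g2 Q';
         s' = total_rate Q'; j = other_state i
     in 3/2 * (a' i - r i) + disc_moment 2 s' * b' i
        + exit_rate Q i * ((r j - r i) - 2 * (a' j - a' i) - 2 * disc_moment 1 s' * (b' j - b' i)
            - total_rate Q * (F disc g1 g2 j Q' - F disc g1 g2 i Q')))"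

lemma switch_payoff_deriv2_at_0:
  assumes "admissible Q" "admissible Q'" "i \<in> states"
  shows "exp_sum (exp_sum_deriv (exp_sum_deriv (switch_payoff_coeffs g1 g2 i Q Q'))) 0
    = switch_deriv2 g1 g2 i Q Q'"
proof -
  let ?r = "rate g1 g2 Q" and ?a' = "long_run_rate g1 g2 Q'" and ?b' = "transient_rate g1 g2 Q'"
    and ?j = "other_state i" and ?s = "total_rate Q" and ?q = "exit_rate Q i"
  have sa: "?s * (?a' i - limit_mean Q i ?a') = - (?q * (?a' ?j - ?a' i))"
    using total_rate_mult_limit_mean[OF assms(1), of i ?a'] by (simp add: algebra_simps)
  have sb: "?s * (?b' i - limit_mean Q i ?b') = - (?q * (?b' ?j - ?b' i))"
    using total_rate_mult_limit_mean[OF assms(1), of i ?b'] by (simp add: algebra_simps)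
  have sr: "?s * transient_rate g1 g2 Q i = - (?q * (?r ?j - ?r i))"
    using total_rate_mult_limit_mean[OF assms(1), of i ?r]
    by (simp add: transient_rate_def long_run_rate_def algebra_simps)
  have "exp_sum (exp_sum_deriv (exp_sum_deriv (switch_payoff_coeffs g1 g2 i Q Q'))) 0
      = 3/2 * (?a' i - ?r i) - ?s * transient_rate g1 g2 Q i + disc_moment 2 (total_rate Q') * ?b' i
        + 2 * (?s * (?a' i - limit_mean Q i ?a')
          + disc_moment 1 (total_rate Q') * (?s * (?b' i - limit_mean Q i ?b')))
        + ?s * (3/4 * (?s * (?a' i - limit_mean Q i ?a'))
          + disc_moment 0 (total_rate Q') * (?s * (?b' i - limit_mean Q i ?b')))"
    unfolding switch_payoff_coeffs_def Let_def
      exp_sum_deriv_switch_coeffs(2)[OF total_rate_nonneg[OF assms(1)]]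
    by (simp add: transient_rate_def algebra_simps power2_eq_square)
  also have "\<dots> = switch_deriv2 g1 g2 i Q Q'"
    unfolding sa sb sr switch_deriv2_def Let_def F_other_state_diff[OF assms(2,3)]
    by (simp add: algebra_simps)
  finally show ?thesis .
qed

section \<open>Equilibrium criteria\<close>

lemma eventually_Fsw_eq_exp_sum:
  assumes "admissible Q" "admissible Q'" "i \<in> states"
  shows "\<forall>\<^sub>F e in at_right 0. Fsw disc g1 g2 i Q e Q' = exp_sum (switch_payoff_coeffs g1 g2 i Q Q') e"
  using eventually_at_right_less[of "0::real"]
  by eventually_elim (simp add: Fsw_eq_exp_sum[OF assms])

lemma weak_eq_if_hamiltonian_max:
  fixes g1 g2 :: "real \<Rightarrow> real"
  assumes "admissible Q'"
    and max: "\<And>Q i. admissible Q \<Longrightarrow> i \<in> states \<Longrightarrow>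
      hamiltonian_for g1 g2 Q' Q i \<le> hamiltonian_for g1 g2 Q' Q' i"
  shows "weak_eq disc g1 g2 Q'"
  unfolding weak_eq_def
proof (intro allI impI)
  fix Q i
  assume Q: "admissible Q" and i: "i \<in> states"
  let ?cs = "switch_payoff_coeffs g1 g2 i Q Q'"
  let ?D = "hamiltonian_for g1 g2 Q' Q i - hamiltonian_for g1 g2 Q' Q' i"
  have "((\<lambda>e. (exp_sum ?cs e - exp_sum ?cs 0) / e) \<longlongrightarrow> ?D) (at 0)"
    using has_real_derivative_exp_sum[of ?cs 0]
    unfolding DERIV_def switch_payoff_deriv_at_0[OF Q assms(1) i] by simp
  then have "((\<lambda>e. (exp_sum ?cs e - exp_sum ?cs 0) / e) \<longlongrightarrow> ?D) (at_right 0)"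
    by (rule tendsto_mono[OF at_le, rotated]) simp
  then have "((\<lambda>e. - ((exp_sum ?cs e - exp_sum ?cs 0) / e)) \<longlongrightarrow> - ?D) (at_right 0)"
    by (rule tendsto_minus)
  moreover have "\<forall>\<^sub>F e in at_right 0.
      - ((exp_sum ?cs e - exp_sum ?cs 0) / e) = (F disc g1 g2 i Q' - Fsw disc g1 g2 i Q e Q') / e"
    using eventually_Fsw_eq_exp_sum[OF Q assms(1) i, of g1 g2]
    by eventually_elim (simp add: F_eq_exp_sum[OF assms(1) i, where Q = Q] minus_divide_left)
  ultimately have "((\<lambda>e. (F disc g1 g2 i Q' - Fsw disc g1 g2 i Q e Q') / e) \<longlongrightarrow> - ?D) (at_right 0)"
    by (rule Lim_transform_eventually)
  then have "((\<lambda>e. ereal ((F disc g1 g2 i Q' - Fsw disc g1 g2 i Q e Q') / e)) \<longlongrightarrow> ereal (- ?D))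
      (at_right 0)"
    by (rule tendsto_ereal)
  then have "Liminf (at_right 0) (\<lambda>e. ereal ((F disc g1 g2 i Q' - Fsw disc g1 g2 i Q e Q') / e))
      = ereal (- ?D)"
    by (intro lim_imp_Liminf) simp_all
  then show "Liminf (at_right 0) (\<lambda>e. ereal ((F disc g1 g2 i Q' - Fsw disc g1 g2 i Q e Q') / e)) \<ge> 0"
    using max[OF Q i] by simp
qed

lemma eventually_F_less_Fsw:
  assumes "admissible Q" "admissible Q'" "i \<in> states"
    and "hamiltonian_for g1 g2 Q' Q i = hamiltonian_for g1 g2 Q' Q' i"
    and "switch_deriv2 g1 g2 i Q Q' > 0"
  shows "\<forall>\<^sub>F e in at_right 0. F disc g1 g2 i Q' < Fsw disc g1 g2 i Q e Q'"
proof -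
  let ?cs = "switch_payoff_coeffs g1 g2 i Q Q'"
  have "\<forall>\<^sub>F e in at_right 0. exp_sum ?cs 0 < exp_sum ?cs e"
    by (rule eventually_at_right_greater_of_deriv2_pos[OF has_real_derivative_exp_sum
          has_real_derivative_exp_sum])
      (use assms in \<open>simp_all add: switch_payoff_deriv_at_0 switch_payoff_deriv2_at_0\<close>)
  with eventually_Fsw_eq_exp_sum[OF assms(1-3), of g1 g2] show ?thesis
    by eventually_elim (simp add: F_eq_exp_sum[OF assms(2,3), where Q = Q])
qed

lemma eventually_Fsw_less_F:
  assumes "admissible Q" "admissible Q'" "i \<in> states"
    and "hamiltonian_for g1 g2 Q' Q i < hamiltonian_for g1 g2 Q' Q' i
      \<or> hamiltonian_for g1 g2 Q' Q i = hamiltonian_for g1 g2 Q' Q' i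
        \<and> switch_deriv2 g1 g2 i Q Q' < 0"
  shows "\<forall>\<^sub>F e in at_right 0. Fsw disc g1 g2 i Q e Q' < F disc g1 g2 i Q'"
proof -
  let ?cs = "switch_payoff_coeffs g1 g2 i Q Q'"
  have "\<forall>\<^sub>F e in at_right 0. exp_sum ?cs e < exp_sum ?cs 0"
    using assms(4)
  proof
    assume "hamiltonian_for g1 g2 Q' Q i < hamiltonian_for g1 g2 Q' Q' i"
    then show ?thesis
      by (intro eventually_at_right_less_of_deriv_neg[OF has_real_derivative_exp_sum])
        (simp add: switch_payoff_deriv_at_0[OF assms(1-3)])
  next
    assume "hamiltonian_for g1 g2 Q' Q i = hamiltonian_for g1 g2 Q' Q' i
      \<and> switch_deriv2 g1 g2 i Q Q' < 0"
    then show ?thesis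
      by (intro eventually_at_right_less_of_deriv2_neg[OF has_real_derivative_exp_sum
            has_real_derivative_exp_sum])
        (simp_all add: switch_payoff_deriv_at_0[OF assms(1-3)]
          switch_payoff_deriv2_at_0[OF assms(1-3)])
  qed
  with eventually_Fsw_eq_exp_sum[OF assms(1-3), of g1 g2] show ?thesis
    by eventually_elim (simp add: F_eq_exp_sum[OF assms(2,3), where Q = Q])
qed

lemma strong_eq_iff_eventually:
  "strong_eq \<delta> g1 g2 Q' \<longleftrightarrow> (\<forall>Q i. admissible Q \<longrightarrow> i \<in> states \<longrightarrow>
    (\<forall>\<^sub>F e in at_right 0. Fsw \<delta> g1 g2 i Q e Q' \<le> F \<delta> g1 g2 i Q'))"
proof -
  have "(\<exists>\<epsilon>>0. \<forall>\<epsilon>'. 0 < \<epsilon>' \<and> \<epsilon>' \<le> \<epsilon> \<longrightarrow> P \<epsilon>') \<longleftrightarrow> (\<forall>\<^sub>F e in at_right 0. P e)" for P :: "real \<Rightarrow> bool"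
  proof
    assume "\<exists>\<epsilon>>0. \<forall>\<epsilon>'. 0 < \<epsilon>' \<and> \<epsilon>' \<le> \<epsilon> \<longrightarrow> P \<epsilon>'"
    then show "\<forall>\<^sub>F e in at_right 0. P e"
      unfolding eventually_at_right_field by force
  next
    assume "\<forall>\<^sub>F e in at_right 0. P e"
    then obtain b where "b > 0" "\<And>e. 0 < e \<Longrightarrow> e < b \<Longrightarrow> P e"
      unfolding eventually_at_right_field by auto
    then show "\<exists>\<epsilon>>0. \<forall>\<epsilon>'. 0 < \<epsilon>' \<and> \<epsilon>' \<le> \<epsilon> \<longrightarrow> P \<epsilon>'"
      by (intro exI[of _ "b / 2"]) auto
  qed
  then show ?thesis
    unfolding strong_eq_def by presburger
qed

definition unprofitable_deviation :: "(real \<Rightarrow> real) \<Rightarrow> (real \<Rightarrow> real) \<Rightarrow> nat \<Rightarrow> gen \<Rightarrow> gen \<Rightarrow> bool" where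
  "unprofitable_deviation g1 g2 i Q Q' \<longleftrightarrow>
    hamiltonian_for g1 g2 Q' Q i < hamiltonian_for g1 g2 Q' Q' i
    \<or> hamiltonian_for g1 g2 Q' Q i = hamiltonian_for g1 g2 Q' Q' i
      \<and> switch_deriv2 g1 g2 i Q Q' < 0
    \<or> (\<forall>e\<ge>0. Fsw disc g1 g2 i Q e Q' = F disc g1 g2 i Q')"

lemma strong_eq_if_unprofitable_deviation:
  assumes "admissible Q'"
    and "\<And>Q i. admissible Q \<Longrightarrow> i \<in> states \<Longrightarrow> unprofitable_deviation g1 g2 i Q Q'"
  shows "strong_eq disc g1 g2 Q'"
  unfolding strong_eq_iff_eventually
proof (intro allI impI)
  fix Q i
  assume Q: "admissible Q" and i: "i \<in> states"
  show "\<forall>\<^sub>F e in at_right 0. Fsw disc g1 g2 i Q e Q' \<le> F disc g1 g2 i Q'"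
  proof (cases "\<forall>e\<ge>0. Fsw disc g1 g2 i Q e Q' = F disc g1 g2 i Q'")
    case True
    show ?thesis
      using eventually_at_right_less[of "0::real"] by (rule eventually_mono) (simp add: True)
  next
    case False
    with assms(2)[OF Q i] have "\<forall>\<^sub>F e in at_right 0. Fsw disc g1 g2 i Q e Q' < F disc g1 g2 i Q'"
      unfolding unprofitable_deviation_def by (intro eventually_Fsw_less_F[OF Q assms(1) i]) blast
    then show ?thesis
      by (rule eventually_mono) simp
  qed
qed

section \<open>The example\<close>

definition reward1 :: "real \<Rightarrow> real" where
  "reward1 a = - (a ^ 2)"

definition reward2 :: "real \<Rightarrow> real" where
  "reward2 b = (if b < 7/12 then 193/144 + 5/6 * b else 2 - (1 - b) ^ 2)"

lemma reward2_le: "reward2 b - 5/6 * b \<le> 193/144"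
proof (cases "b < 7/12")
  case False
  then have "reward2 b - 5/6 * b = 193/144 - (b - 7/12)\<^sup>2"
    by (simp add: reward2_def power2_eq_square algebra_simps)
  then show ?thesis
    by simp
qed (simp add: reward2_def)

lemma reward2_sub_less:
  assumes "c > 5/6" "y > 0"
  shows "reward2 y - c * y < 193/144"
  using reward2_le[of y] mult_strict_right_mono[OF assms] by simp

lemma reward2_flat:
  assumes "b \<le> 7/12"
  shows "reward2 b - 5/6 * b = 193/144"
proof (cases "b < 7/12")
  case False
  with assms have "b = 7/12"
    by simp
  show ?thesis
    unfolding \<open>b = 7/12\<close> by (simp add: reward2_def power2_eq_square)
qed (simp add: reward2_def)

lemmas example_simps = rate_def exit_rate_def total_rate_def other_state_def limit_mean_def
  long_run_rate_def transient_rate_def reward1_def admissible_def states_def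

lemma F_gap_Qstar:
  "F disc reward1 reward2 2 (5/12, 7/12) = F disc reward1 reward2 1 (5/12, 7/12) + 5/6"
  using F_other_state_diff[of "(5/12, 7/12)" 1 reward1 reward2]
  by (simp add: example_simps reward2_def disc_moment_def power2_eq_square)

lemma hamiltonian_Qstar:
  shows "hamiltonian_for reward1 reward2 (5/12, 7/12) (x, y) 1 = 5/6 * x - x\<^sup>2"
    and "hamiltonian_for reward1 reward2 (5/12, 7/12) (x, y) 2 = reward2 y - 5/6 * y"
  unfolding hamiltonian_def by (simp_all add: F_gap_Qstar example_simps algebra_simps)

lemma weak_eq_Qstar: "weak_eq disc reward1 reward2 (5/12, 7/12)"
proof (rule weak_eq_if_hamiltonian_max)
  fix Q :: gen and i
  assume "i \<in> states"
  obtain x y where Q: "Q = (x, y)"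
    by fastforce
  have "5/6 * x - x\<^sup>2 \<le> 5/6 * (5/12) - (5/12)\<^sup>2"
    using zero_le_power2[of "x - 5/12"] by (simp add: power2_eq_square algebra_simps)
  moreover have "reward2 y - 5/6 * y \<le> reward2 (7/12) - 5/6 * (7/12)"
    using reward2_le[of y] reward2_flat[of "7/12"] by simp
  ultimately show "hamiltonian_for reward1 reward2 (5/12, 7/12) Q i
      \<le> hamiltonian_for reward1 reward2 (5/12, 7/12) (5/12, 7/12) i"
    using states_cases[OF \<open>i \<in> states\<close>] unfolding Q by (auto simp only: hamiltonian_Qstar)
qed (simp add: admissible_def)

lemma switch_deriv2_Qstar:
  assumes "b < 7/12"
  shows "switch_deriv2 reward1 reward2 2 (5/12, b) (5/12, 7/12) = (7/12 - b) / 12"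
  using assms
  by (simp add: switch_deriv2_def Let_def F_gap_Qstar example_simps reward2_def disc_moment_def
      power2_eq_square field_simps)

lemma eventually_F_less_Fsw_Qstar:
  assumes "0 \<le> b" "b < 7/12"
  shows "\<forall>\<^sub>F \<epsilon> in at_right 0.
    F disc reward1 reward2 2 (5/12, 7/12) < Fsw disc reward1 reward2 2 (5/12, b) \<epsilon> (5/12, 7/12)"
proof (rule eventually_F_less_Fsw)
  show "hamiltonian_for reward1 reward2 (5/12, 7/12) (5/12, b) 2
      = hamiltonian_for reward1 reward2 (5/12, 7/12) (5/12, 7/12) 2"
    unfolding hamiltonian_Qstar using reward2_flat[of b] reward2_flat[of "7/12"] assms(2) by simp
  show "switch_deriv2 reward1 reward2 2 (5/12, b) (5/12, 7/12) > 0"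
    unfolding switch_deriv2_Qstar[OF assms(2)] using assms(2) by simp
qed (use assms(1) in \<open>simp_all add: admissible_def states_def\<close>)

lemma not_strong_eq_Qstar: "\<not> strong_eq disc reward1 reward2 (5/12, 7/12)"
proof
  assume "strong_eq disc reward1 reward2 (5/12, 7/12)"
  moreover have "admissible (5/12, 0)" "(2::nat) \<in> states"
    by (simp_all add: admissible_def states_def)
  ultimately have "\<forall>\<^sub>F e in at_right 0.
      Fsw disc reward1 reward2 2 (5/12, 0) e (5/12, 7/12) \<le> F disc reward1 reward2 2 (5/12, 7/12)"
    unfolding strong_eq_iff_eventually by blast
  moreover have "\<forall>\<^sub>F e in at_right 0.
      F disc reward1 reward2 2 (5/12, 7/12) < Fsw disc reward1 reward2 2 (5/12, 0) e (5/12, 7/12)"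
    by (rule eventually_F_less_Fsw_Qstar) simp_all
  ultimately have "\<forall>\<^sub>F e in at_right (0::real). False"
    by eventually_elim linarith
  then show False
    by simp
qed

lemma F_gap_Qbar:
  assumes "a > 0" "disc_moment 0 a * (a\<^sup>2 + 193/144) = 2 * a"
  shows "F disc reward1 reward2 2 (a, 0) = F disc reward1 reward2 1 (a, 0) + 2 * a"
proof -
  have "long_run_rate reward1 reward2 (a, 0) 2 = long_run_rate reward1 reward2 (a, 0) 1"
      "transient_rate reward1 reward2 (a, 0) 2 - transient_rate reward1 reward2 (a, 0) 1 = a\<^sup>2 + 193/144"
    using assms(1) by (simp_all add: example_simps reward2_def)
  then show ?thesis
    using F_other_state_diff[of "(a, 0)" 1 reward1 reward2] assms(1,2)
    by (simp add: admissible_def states_def other_state_def total_rate_def algebra_simps)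
qed

lemma hamiltonian_Qbar:
  assumes "a > 0" "disc_moment 0 a * (a\<^sup>2 + 193/144) = 2 * a"
  shows "hamiltonian_for reward1 reward2 (a, 0) (x, y) 1 = 2 * a * x - x\<^sup>2"
    and "hamiltonian_for reward1 reward2 (a, 0) (x, y) 2 = reward2 y - 2 * a * y"
  unfolding hamiltonian_def
  by (simp_all add: F_gap_Qbar[OF assms(1,2)] example_simps algebra_simps)

lemma switch_deriv2_Qbar:
  assumes "a > 0" "disc_moment 0 a * (a\<^sup>2 + 193/144) = 2 * a"
  shows "switch_deriv2 reward1 reward2 1 (a, y) (a, 0) = - a * (193/144 - reward2 y + 2 * a * y)"
proof -
  let ?K = "a\<^sup>2 + 193/144"
  have "a \<ge> 0"
    using assms(1) by simp
  have "disc_moment 1 a * ?K = ?K - a * (disc_moment 0 a * ?K)"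
    unfolding disc_moment_1[OF \<open>a \<ge> 0\<close>] by (simp only: left_diff_distrib mult_1_left mult.assoc)
  then have M: "disc_moment 1 a * ?K = ?K - 2 * a\<^sup>2"
    unfolding assms(2) by (simp add: power2_eq_square)
  have "disc_moment 2 a * ?K = 3/2 * ?K - a * ?K + a\<^sup>2 * (disc_moment 0 a * ?K)"
    unfolding disc_moment_2[OF \<open>a \<ge> 0\<close>] by (simp only: left_diff_distrib distrib_right mult.assoc)
  then have N: "disc_moment 2 a * ?K = 3/2 * ?K - a * ?K + 2 * a ^ 3"
    unfolding assms(2) by (simp add: power2_eq_square power3_eq_cube)
  have "switch_deriv2 reward1 reward2 1 (a, y) (a, 0)
      = 3/2 * ?K - disc_moment 2 a * ?K + a * (reward2 y + a\<^sup>2 - 2 * (disc_moment 1 a * ?K) - (a + y) * (2 * a))"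
    using assms(1)
    by (simp add: switch_deriv2_def Let_def F_gap_Qbar[OF assms] example_simps reward2_def algebra_simps)
  also have "\<dots> = - a * (193/144 - reward2 y + 2 * a * y)"
    unfolding M N by (simp add: algebra_simps power2_eq_square power3_eq_cube)
  finally show ?thesis .
qed

lemma unprofitable_deviation_Qbar:
  assumes "a > 5/12" "disc_moment 0 a * (a\<^sup>2 + 193/144) = 2 * a"
    and "admissible Q" "i \<in> states"
  shows "unprofitable_deviation reward1 reward2 i Q (a, 0)"
proof -
  have "a > 0" and Qbar: "admissible (a, 0)"
    using assms(1) by (simp_all add: admissible_def)
  note H = hamiltonian_Qbar[OF \<open>a > 0\<close> assms(2)]
  let ?H = "hamiltonian_for reward1 reward2 (a, 0)"
  obtain x y where xy: "Q = (x, y)"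
    by fastforce
  have "y \<ge> 0"
    using assms(3) by (simp add: xy admissible_def)
  consider "i = 1" "x \<noteq> a" | "i = 1" "x = a" "y = 0" | "i = 1" "x = a" "y > 0" | "i = 2" "y > 0"
    | "i = 2" "y = 0"
    using states_cases[OF assms(4)] \<open>y \<ge> 0\<close> by fastforce
  then show ?thesis
  proof cases
    case 1
    have "(x - a)\<^sup>2 > 0"
      using \<open>x \<noteq> a\<close> by simp
    then have "?H Q i < ?H (a, 0) i"
      unfolding xy \<open>i = 1\<close> H by (simp add: power2_eq_square algebra_simps)
    then show ?thesis
      unfolding unprofitable_deviation_def by blast
  next
    case 2
    then show ?thesis
      using Fsw_self[OF Qbar assms(4)] unfolding unprofitable_deviation_def by (simp add: xy)
  next
    case 3
    have "?H Q i = ?H (a, 0) i"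
      unfolding xy \<open>i = 1\<close> \<open>x = a\<close> H by (simp add: power2_eq_square)
    moreover have "switch_deriv2 reward1 reward2 i Q (a, 0) < 0"
      unfolding xy \<open>i = 1\<close> \<open>x = a\<close> switch_deriv2_Qbar[OF \<open>a > 0\<close> assms(2)]
      using reward2_sub_less[of "2 * a" y] assms(1) \<open>y > 0\<close> \<open>a > 0\<close> by simp
    ultimately show ?thesis
      unfolding unprofitable_deviation_def by blast
  next
    case 4
    have "?H Q i < ?H (a, 0) i"
      unfolding xy \<open>i = 2\<close> H using reward2_sub_less[of "2 * a" y] assms(1) \<open>y > 0\<close>
      by (simp add: reward2_def)
    then show ?thesis
      unfolding unprofitable_deviation_def by blast
  next
    case 5
    then show ?thesis
      using Fsw_absorbing[OF assms(3) Qbar assms(4)] unfolding unprofitable_deviation_def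
      by (simp add: xy exit_rate_def rate_def)
  qed
qed

lemma strong_eq_Qbar:
  assumes "a > 5/12" "disc_moment 0 a * (a\<^sup>2 + 193/144) = 2 * a"
  shows "strong_eq disc reward1 reward2 (a, 0)"
  using assms unprofitable_deviation_Qbar
  by (intro strong_eq_if_unprofitable_deviation) (simp_all add: admissible_def)

text \<open>The equation for \<open>a\<close> in the theorem, with denominators cleared.\<close>
definition abar_poly :: "real \<Rightarrow> real" where
  "abar_poly x = 2 * x ^ 3 + 9 * x\<^sup>2 + 383/72 * x - 193/48"

lemma abar_equation_iff:
  assumes "x \<ge> 0"
  shows "2 * x = 1/2 * (1 / (1 + x) + 1 / (2 + x)) * (x\<^sup>2 + 193/144) \<longleftrightarrow> abar_poly x = 0"
proof -
  have "2 * x = 1/2 * (1 / p + 1 / q) * (x\<^sup>2 + 193/144)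
      \<longleftrightarrow> 2 * x * (2 * p * q) = (p + q) * (x\<^sup>2 + 193/144)" if "p \<noteq> 0" "q \<noteq> 0" for p q
    using that by (simp add: field_simps)
  from this[of "1 + x" "2 + x"]
  have "2 * x = 1/2 * (1 / (1 + x) + 1 / (2 + x)) * (x\<^sup>2 + 193/144)
      \<longleftrightarrow> 2 * x * (2 * (1 + x) * (2 + x)) = ((1 + x) + (2 + x)) * (x\<^sup>2 + 193/144)"
    using assms by simp
  moreover have "2 * x * (2 * (1 + x) * (2 + x)) - ((1 + x) + (2 + x)) * (x\<^sup>2 + 193/144)
      = abar_poly x"
    by (simp add: abar_poly_def field_simps power2_eq_square power3_eq_cube)
  ultimately show ?thesis
    by linarith
qed

lemma strict_mono_on_abar_poly: "strict_mono_on {0..} abar_poly"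
proof (rule strict_mono_onI)
  fix x y :: real
  assume "x \<in> {0..}" "x < y"
  then have "x ^ 3 \<le> y ^ 3" "x\<^sup>2 \<le> y\<^sup>2"
    by (auto intro!: power_mono)
  with \<open>x < y\<close> show "abar_poly x < abar_poly y"
    unfolding abar_poly_def by linarith
qed

lemma abar_poly_root: "\<exists>x\<ge>0. abar_poly x = 0"
proof -
  have "isCont abar_poly x" for x
    unfolding abar_poly_def[abs_def] by (intro continuous_intros)
  then have "\<exists>x\<ge>0. x \<le> 1 \<and> abar_poly x = 0"
    by (intro IVT) (simp_all add: abar_poly_def)
  then show ?thesis
    by blast
qed

lemma abar_poly_root_gt:
  assumes "abar_poly x = 0" "x \<ge> 0"
  shows "x > 5/12"
proof (rule ccontr)
  assume "\<not> x > 5/12"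
  then have "abar_poly x \<le> abar_poly (5/12)"
    using strict_mono_on_abar_poly assms(2) by (auto intro: strict_mono_on_leD)
  moreover have "abar_poly (5/12) < 0"
    by (simp add: abar_poly_def power3_eq_cube power2_eq_square)
  ultimately show False
    using assms(1) by simp
qed

theorem mainTheorem13:
  fixes \<delta> g1 g2 :: "real \<Rightarrow> real"
  assumes d: "\<delta> = (\<lambda>t. exp (- t) / 2 + exp (- 2 * t) / 2)"
    and h1: "g1 = (\<lambda>a. - (a ^ 2))"
    and h2: "g2 = (\<lambda>b. if b < 7/12 then 193/144 + 5/6 * b else 2 - (1 - b) ^ 2)"
  shows "weak_eq \<delta> g1 g2 (5/12, 7/12)
       \<and> \<not> strong_eq \<delta> g1 g2 (5/12, 7/12)
       \<and> (\<forall>b. 0 \<le> b \<and> b < 7/12 \<longrightarrow>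
             (\<forall>\<^sub>F \<epsilon> in at_right 0. F \<delta> g1 g2 2 (5/12, 7/12) < Fsw \<delta> g1 g2 2 (5/12, b) \<epsilon> (5/12, 7/12)))
       \<and> (\<exists>a\<ge>0. 2 * a = 1/2 * (1 / (1 + a) + 1 / (2 + a)) * (a ^ 2 + 193/144)
             \<and> (\<forall>a'\<ge>0. 2 * a' = 1/2 * (1 / (1 + a') + 1 / (2 + a')) * (a' ^ 2 + 193/144) \<longrightarrow> a' = a)
             \<and> 2 * a \<ge> 5/6
             \<and> strong_eq \<delta> g1 g2 (a, 0))"
proof -
  have model: "\<delta> = disc" "g1 = reward1" "g2 = reward2"
    using d h1 h2 by (simp_all add: fun_eq_iff disc_def reward1_def reward2_def)
  obtain a where "a \<ge> 0" "abar_poly a = 0"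
    using abar_poly_root by blast
  have "a > 5/12"
    using abar_poly_root_gt[OF \<open>abar_poly a = 0\<close> \<open>a \<ge> 0\<close>] .
  have eq: "2 * a = 1/2 * (1 / (1 + a) + 1 / (2 + a)) * (a ^ 2 + 193/144)"
    using abar_equation_iff[OF \<open>a \<ge> 0\<close>] \<open>abar_poly a = 0\<close> by blast
  have unique: "a' = a" if "a' \<ge> 0" "2 * a' = 1/2 * (1 / (1 + a') + 1 / (2 + a')) * (a' ^ 2 + 193/144)"
    for a'
  proof -
    have "abar_poly a' = abar_poly a"
      using abar_equation_iff[OF \<open>a' \<ge> 0\<close>] that(2) \<open>abar_poly a = 0\<close> by simp
    then show "a' = a"
      using strict_mono_on_eqD[OF strict_mono_on_abar_poly] \<open>a' \<ge> 0\<close> \<open>a \<ge> 0\<close> by simp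
  qed
  have "disc_moment 0 a * (a\<^sup>2 + 193/144) = 2 * a"
    using eq by (simp add: disc_moment_def algebra_simps)
  with \<open>a > 5/12\<close> have "strong_eq disc reward1 reward2 (a, 0)"
    by (rule strong_eq_Qbar)
  with \<open>a \<ge> 0\<close> eq unique \<open>a > 5/12\<close> show ?thesis
    unfolding model using weak_eq_Qstar not_strong_eq_Qstar eventually_F_less_Fsw_Qstar
    by (intro conjI allI impI exI[of _ a]) auto
qed

end
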